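(* Let $B_n(y)=\sum_{k=0}^n\frac{1}{n+1}\binom{2n+2}{n-k}\binom{n+k}{k}y^k$ be the Borel polynomials. Consider the Riordan array $$L=\left(\frac{1+xy}{(1+(y+1)x)^2},\ \frac{x}{(1+(y+1)x)^2}\right).$$ Then the first column of $L^{-1}$ is $(B_0(y),B_1(y),B_2(y),\dots)^T$, i.e. its generating function is $\sum_n B_n(y)x^n$. Equivalently, $B_n(y)$ is the $n$-th moment of the family of orthogonal polynomials $P_n(x)$ defined by $P_0(x)=1$, $P_1(x)=x-y-2$ and $$P_n(x)=(x-2(y+1))P_{n-1}(x)-(y+1)^2P_{n-2}(x)\quad(n\ge2),$$ i.e. $B_n(y)=\mathcal L(x^n)$ for the linear functional $\mathcal L$ with $\mathcal L(1)=1$ and $\mathcal L(P_n)=0$ for $n\ge1$.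
   Context: A Riordan array $(g(x),f(x))$ (with $g(0)\ne0$, $f(0)=0$, $f'(0)\ne0$) is the lower-triangular matrix with $(n,k)$ entry $[x^n]g(x)f(x)^k$. Riordan arrays form a group under matrix multiplication with $(g,f)\cdot(u,v)=(g\,u(f),v(f))$ and $(g,f)^{-1}=(1/g(\bar f),\bar f)$ where $\bar f$ is the compositional inverse of $f$. Here coefficients are polynomials in $y$. *)

theory Defs
  imports "HOL-Computational_Algebra.Polynomial" "HOL-Computational_Algebra.Formal_Power_Series"
begin

definition yv :: "rat poly" where "yv = [:0, 1:]"

definition borel :: "nat \<Rightarrow> rat poly" where
  "borel n = (\<Sum>k=0..n. monom (of_nat ((2*n+2) choose (n-k)) * of_nat ((n+k) choose k) / of_nat (n+1)) k)"

definition riordan :: "'a::comm_ring_1 fps \<Rightarrow> 'a fps \<Rightarrow> nat \<Rightarrow> nat \<Rightarrow> 'a" where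
  "riordan g f n k = fps_nth (g * f ^ k) n"

text \<open>1/(1+(y+1)x)^2 in Q[y][[x]] (constant term 1, so the inverse exists).\<close>
definition Ldenom_inv :: "rat poly fps" where
  "Ldenom_inv = fps_right_inverse ((1 + fps_const (yv + 1) * fps_X) ^ 2) 1"

definition Lg :: "rat poly fps" where
  "Lg = (1 + fps_const yv * fps_X) * Ldenom_inv"

definition Lf :: "rat poly fps" where
  "Lf = fps_X * Ldenom_inv"

definition Lmat :: "nat \<Rightarrow> nat \<Rightarrow> rat poly" where
  "Lmat = riordan Lg Lf"

fun Pop :: "nat \<Rightarrow> rat poly poly" where
  "Pop 0 = 1"
| "Pop (Suc 0) = [:- (yv + 2), 1:]"
| "Pop (Suc (Suc n)) = [:- (2 * (yv + 1)), 1:] * Pop (Suc n) - smult ((yv + 1)^2) (Pop n)"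

definition is_lower_inverse :: "(nat \<Rightarrow> nat \<Rightarrow> 'a::comm_ring_1) \<Rightarrow> (nat \<Rightarrow> nat \<Rightarrow> 'a) \<Rightarrow> bool" where
  "is_lower_inverse A M \<longleftrightarrow> (\<forall>i j. i < j \<longrightarrow> M i j = 0) \<and>
     (\<forall>i j. (\<Sum>k\<le>i. A i k * M k j) = (if i = j then 1 else 0))"

definition moment_functional :: "(rat poly poly \<Rightarrow> rat poly) \<Rightarrow> bool" where
  "moment_functional \<L> \<longleftrightarrow> (\<forall>p q. \<L> (p + q) = \<L> p + \<L> q) \<and> (\<forall>c p. \<L> (smult c p) = c * \<L> p)
     \<and> \<L> 1 = 1 \<and> (\<forall>n\<ge>1. \<L> (Pop n) = 0)"

end

theory Submission
  imports Defs
begin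

text \<open>
  Multiplying a column of the Riordan array \<open>L\<close> by \<open>(1 + (y+1)x)\<^sup>2\<close> shifts it by one
  place, so the rows of \<open>L\<close> obey the three-term recurrence of the \<open>P\<^sub>n\<close>: \<open>L\<close> is the
  unitriangular coefficient matrix of the orthogonal polynomials.  Hence both the first column
  of \<open>L\<^sup>-\<^sup>1\<close> and the moment sequence of any functional with \<open>\<L>(P\<^sub>n) = \<delta>\<^sub>n\<^sub>0\<close> are the
  unique solution \<open>v\<close> of \<open>L v = e\<^sub>0\<close>, and it suffices to show that the functional with
  moments \<open>B\<^sub>n\<close> annihilates every \<open>P\<^sub>n\<close>, \<open>n \<ge> 1\<close>.

  Write \<open>c = y + 1\<close>, so that the Jacobi parameters are \<open>b\<^sub>0 = c + 1\<close>, \<open>b\<^sub>n = 2c\<close> and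
  \<open>\<lambda>\<^sub>n = c\<^sup>2\<close>.  The mixed moments \<open>\<L>(x\<^sup>m P\<^sub>k) / c\<^sup>2\<^sup>k\<close> are the partial sums
  \<open>\<Sum>\<^sub>j\<^sub>\<le>\<^sub>m\<^sub>-\<^sub>k \<beta>(m+k, j) c\<^sup>j\<close> of the ballot numbers
  \<open>\<beta>(N, j) = C(N+j, N) - C(N+j, N+1)\<close>: the Pascal-type recurrences of \<open>\<beta>\<close> are exactly the
  recurrences of this table, and for \<open>k = 0\<close> expanding \<open>c\<^sup>j = (1 + y)\<^sup>j\<close> and summing a
  hockey-stick identity turns the partial sum into \<open>B\<^sub>m(y)\<close>.
\<close>

unbundle fps_syntax

section \<open>Unitriangular systems\<close>

fun forward_subst :: "(nat \<Rightarrow> nat \<Rightarrow> 'a::comm_ring_1) \<Rightarrow> (nat \<Rightarrow> 'a) \<Rightarrow> nat \<Rightarrow> 'a" where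
  "forward_subst A d i = d i - (\<Sum>k<i. A i k * forward_subst A d k)"

declare forward_subst.simps [simp del]

lemma sum_atMost_eq_lessThan_add: "(\<Sum>k\<le>(n::nat). f k) = (\<Sum>k<n. f k) + f n"
  by (simp add: lessThan_Suc_atMost[symmetric])

lemma forward_subst_solves:
  assumes "\<And>n. A n n = 1"
  shows "(\<Sum>k\<le>n. A n k * forward_subst A d k) = d n"
  using forward_subst.simps[of A d n] by (simp add: sum_atMost_eq_lessThan_add assms)

lemma forward_subst_eq_0:
  assumes "\<And>i. i < j \<Longrightarrow> d i = 0" and "i < j"
  shows "forward_subst A d i = 0"
  using \<open>i < j\<close>
proof (induction i rule: less_induct)
  case (less i)
  then show ?case by (subst forward_subst.simps) (simp add: assms)
qed

lemma unitriangular_solution_unique: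
  fixes A :: "nat \<Rightarrow> nat \<Rightarrow> 'a::comm_ring_1"
  assumes diag: "\<And>n. A n n = 1"
    and x: "\<And>n. (\<Sum>k\<le>n. A n k * x k) = d n"
    and y: "\<And>n. (\<Sum>k\<le>n. A n k * y k) = d n"
  shows "x n = y n"
proof (induction n rule: less_induct)
  case (less n)
  have "(\<Sum>k<n. A n k * x k) = (\<Sum>k<n. A n k * y k)"
    using less by (intro sum.cong) auto
  moreover have "(\<Sum>k<n. A n k * x k) + x n = (\<Sum>k<n. A n k * y k) + y n"
    using x[of n] y[of n] by (simp add: sum_atMost_eq_lessThan_add diag)
  ultimately show ?case by simp
qed

lemma unitriangular_lower_inverse:
  assumes "\<And>n. A n n = 1"
  shows "is_lower_inverse A (\<lambda>i j. forward_subst A (\<lambda>i. if i = j then 1 else 0) i)"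
  unfolding is_lower_inverse_def
  by (auto intro: forward_subst_eq_0 simp: forward_subst_solves assms)

section \<open>Linear functionals on polynomials\<close>

definition functional_of_moments :: "(nat \<Rightarrow> 'a::comm_semiring_1) \<Rightarrow> 'a poly \<Rightarrow> 'a" where
  "functional_of_moments \<mu> p = (\<Sum>i\<le>degree p. coeff p i * \<mu> i)"

lemma functional_of_moments_bound:
  "degree p \<le> n \<Longrightarrow> functional_of_moments \<mu> p = (\<Sum>i\<le>n. coeff p i * \<mu> i)"
  unfolding functional_of_moments_def
  by (rule sum.mono_neutral_left) (auto simp: coeff_eq_0)

lemma functional_of_moments_add:
  "functional_of_moments \<mu> (p + q) = functional_of_moments \<mu> p + functional_of_moments \<mu> q"
proof -
  define n where "n = max (degree p) (degree q)"
  have "degree (p + q) \<le> n" "degree p \<le> n" "degree q \<le> n"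
    by (auto simp: n_def degree_add_le)
  then show ?thesis
    by (simp add: functional_of_moments_bound sum.distrib distrib_right)
qed

lemma functional_of_moments_smult:
  "functional_of_moments \<mu> (smult a p) = a * functional_of_moments \<mu> p"
  using degree_smult_le[of a p]
  by (simp add: functional_of_moments_bound[of _ "degree p"] sum_distrib_left mult.assoc)

lemma functional_of_moments_diff:
  fixes \<mu> :: "nat \<Rightarrow> 'a::comm_ring_1"
  shows "functional_of_moments \<mu> (p - q) = functional_of_moments \<mu> p - functional_of_moments \<mu> q"
  using functional_of_moments_add[of \<mu> "p - q" q] by simp

lemma functional_of_moments_monom:
  "functional_of_moments \<mu> (monom 1 m) = \<mu> m"
  by (simp add: functional_of_moments_bound[of _ m] degree_monom_le mult_delta_left)

lemma linear_functional_expand: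
  fixes \<L> :: "'a::comm_ring_1 poly \<Rightarrow> 'a"
  assumes add: "\<And>p q. \<L> (p + q) = \<L> p + \<L> q" and smult: "\<And>c p. \<L> (smult c p) = c * \<L> p"
    and "degree p \<le> N"
  shows "\<L> p = (\<Sum>i\<le>N. coeff p i * \<L> (monom 1 i))"
proof -
  have sum: "\<L> (\<Sum>i\<in>I. f i) = (\<Sum>i\<in>I. \<L> (f i))" for I :: "nat set" and f
  proof (induction I rule: infinite_finite_induct)
    case empty
    show ?case using smult[of 0 0] by simp
  qed (use smult[of 0 0] add in simp_all)
  have "\<L> p = \<L> (\<Sum>i\<le>N. smult (coeff p i) (monom 1 i))"
    using poly_as_sum_of_monoms'[OF \<open>degree p \<le> N\<close>] by (simp add: smult_monom)
  then show ?thesis by (simp add: sum smult)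
qed

section \<open>The Riordan array as coefficient matrix of the orthogonal polynomials\<close>

definition yplus1 :: "rat poly" where "yplus1 = yv + 1"

abbreviation Ldenom :: "rat poly fps" where
  "Ldenom \<equiv> (1 + fps_const (yv + 1) * fps_X) ^ 2"

lemma riordan_fps_X_mult:
  "riordan g (fps_X * h) n k = (if n < k then 0 else (g * h ^ k) $ (n - k))"
proof -
  have "g * (fps_X * h) ^ k = fps_X ^ k * (g * h ^ k)"
    by (simp add: power_mult_distrib mult.left_commute)
  then show ?thesis by (simp add: riordan_def fps_X_power_mult_nth)
qed

lemma Lmat_above_diag: "n < k \<Longrightarrow> Lmat n k = 0"
  by (simp add: Lmat_def Lf_def riordan_fps_X_mult)

lemma Lmat_diag: "Lmat n n = 1"
  by (simp add: Lmat_def Lf_def Lg_def riordan_fps_X_mult Ldenom_inv_def fps_power_zeroth)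

lemma Ldenom_mult_Ldenom_inv: "Ldenom * Ldenom_inv = 1"
  unfolding Ldenom_inv_def by (rule fps_right_inverse) (simp add: fps_power_zeroth)

lemma fps_one_plus_const_X_square_mult:
  fixes c :: "'a::comm_ring_1"
  shows "(1 + fps_const c * fps_X) ^ 2 * f
      = f + fps_const (2 * c) * (fps_X * f) + fps_const (c ^ 2) * (fps_X * (fps_X * f))"
proof -
  have "fps_const (2 * c) = 2 * fps_const c" "fps_const (c ^ 2) = fps_const c * fps_const c"
    by (simp_all add: fps_numeral_fps_const power2_eq_square)
  then show ?thesis by (simp add: power2_eq_square algebra_simps)
qed

lemma Ldenom_mult_nth:
  "(Ldenom * f) $ n = f $ n + (if n = 0 then 0 else 2 * yplus1 * f $ (n - 1))
     + (if n < 2 then 0 else yplus1^2 * f $ (n - 2))"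
  unfolding fps_one_plus_const_X_square_mult by (simp add: yplus1_def numeral_2_eq_2)

lemma Lmat_column_equation:
  "(Ldenom * (Lg * Lf ^ k)) $ n =
     (if k = 0 then (if n = 0 then 1 else if n = 1 then yv else 0)
      else if n = 0 then 0 else Lmat (n - 1) (k - 1))"
proof (cases k)
  case 0
  have "Ldenom * Lg = (1 + fps_const yv * fps_X) * (Ldenom * Ldenom_inv)"
    by (simp add: Lg_def algebra_simps)
  then have "Ldenom * Lg = 1 + fps_const yv * fps_X"
    by (simp add: Ldenom_mult_Ldenom_inv)
  with 0 show ?thesis by simp
next
  case (Suc k')
  have "Ldenom * (Lg * Lf ^ Suc k') = fps_X * (Lg * Lf ^ k') * (Ldenom * Ldenom_inv)"
    by (simp add: Lf_def algebra_simps)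
  then have column: "Ldenom * (Lg * Lf ^ Suc k') = fps_X * (Lg * Lf ^ k')"
    by (simp add: Ldenom_mult_Ldenom_inv)
  show ?thesis
    unfolding Suc Lmat_def riordan_def by (simp only: column) simp
qed

lemma Lmat_Suc_Suc:
  "Lmat (Suc (Suc n)) k = (if k = 0 then 0 else Lmat (Suc n) (k - 1))
     - 2 * yplus1 * Lmat (Suc n) k - yplus1^2 * Lmat n k"
  using Ldenom_mult_nth[of "Lg * Lf ^ k" "Suc (Suc n)"] Lmat_column_equation[of k "Suc (Suc n)"]
  by (simp add: Lmat_def riordan_def algebra_simps)

lemma Lmat_0: "Lmat 0 k = (if k = 0 then 1 else 0)"
  using Lmat_diag[of 0] by (simp add: Lmat_above_diag)

lemma Lmat_1: "Lmat (Suc 0) k = (if k = 0 then - (yv + 2) else if k = 1 then 1 else 0)"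
proof -
  have "Lmat (Suc 0) 0 + 2 * yplus1 * Lmat 0 0 = yv"
    using Ldenom_mult_nth[of "Lg * Lf ^ 0" 1] Lmat_column_equation[of 0 1]
    by (simp add: Lmat_def riordan_def)
  then have "Lmat (Suc 0) 0 = - (yv + 2)"
    by (simp add: Lmat_diag yplus1_def algebra_simps)
  then show ?thesis
    using Lmat_diag[of 1] by (auto simp: Lmat_above_diag)
qed

lemma coeff_Pop_Suc_Suc:
  "coeff (Pop (Suc (Suc n))) k = (if k = 0 then 0 else coeff (Pop (Suc n)) (k - 1))
     - 2 * yplus1 * coeff (Pop (Suc n)) k - yplus1^2 * coeff (Pop n) k"
proof -
  have "[:a, 1:] * p = smult a p + pCons 0 p" for a :: "rat poly" and p :: "rat poly poly"
    by simp
  then show ?thesis by (simp add: coeff_pCons' yplus1_def algebra_simps)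
qed

lemma Lmat_eq_coeff_Pop: "Lmat n k = coeff (Pop n) k"
proof (induction n arbitrary: k rule: Pop.induct)
  case 1
  show ?case by (simp add: Lmat_0)
next
  case 2
  show ?case by (simp add: Lmat_1 coeff_pCons split: nat.split)
next
  case (3 n)
  then show ?case by (simp add: Lmat_Suc_Suc coeff_Pop_Suc_Suc del: Pop.simps)
qed

lemma degree_Pop: "degree (Pop n) \<le> n"
  by (rule degree_le) (simp add: Lmat_above_diag flip: Lmat_eq_coeff_Pop)

section \<open>Ballot numbers and mixed moments\<close>

lemma sum_smult_power_shift_recurrence:
  fixes a b c d :: "nat \<Rightarrow> 'a::comm_ring_1" and x :: "'a poly"
  assumes "a 0 = b 0" and "a 1 = b 1 + u * c 0"
    and "\<And>j. a (Suc (Suc j)) = b (Suc (Suc j)) + u * c (Suc j) + d j"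
  shows "(\<Sum>j<Suc L. smult (a j) (x ^ j)) = (\<Sum>j<Suc L. smult (b j) (x ^ j))
           + smult u (x * (\<Sum>j<L. smult (c j) (x ^ j)))
           + x^2 * (\<Sum>j<L - 1. smult (d j) (x ^ j))"
proof (induction L)
  case 0
  show ?case using assms(1) by simp
next
  case (Suc L)
  have new_term: "smult (a (Suc L)) (x ^ Suc L) = smult (b (Suc L)) (x ^ Suc L)
      + smult u (x * smult (c L) (x ^ L))
      + x^2 * (if L = 0 then 0 else smult (d (L - 1)) (x ^ (L - 1)))"
    by (cases L) (simp_all add: assms(1,3) assms(2)[unfolded One_nat_def] smult_add_left
        mult_smult_right power2_eq_square mult.assoc)
  have "(\<Sum>j<L. smult (d j) (x ^ j)) = (\<Sum>j<L - 1. smult (d j) (x ^ j))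
      + (if L = 0 then 0 else smult (d (L - 1)) (x ^ (L - 1)))"
    by (cases L) simp_all
  then show ?case
    using Suc.IH new_term by (simp add: algebra_simps smult_add_right)
qed

definition ballot :: "nat \<Rightarrow> nat \<Rightarrow> rat" where
  "ballot N j = of_nat ((N + j) choose N) - of_nat ((N + j) choose Suc N)"

lemma ballot_0 [simp]: "ballot N 0 = 1"
  by (simp add: ballot_def)

lemma ballot_1 [simp]: "ballot N (Suc 0) = of_nat N"
  by (simp add: ballot_def)

lemma ballot_Suc_rec:
  "ballot (Suc N) (Suc (Suc j)) = ballot N (Suc (Suc j)) + ballot N (Suc j) + ballot (Suc N) j"
  by (simp add: ballot_def)

lemma ballot_Suc_Suc_rec:
  "ballot (Suc (Suc N)) (Suc (Suc j))
     = ballot N (Suc (Suc j)) + 2 * ballot (Suc N) (Suc j) + ballot (Suc (Suc N)) j"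
  by (simp add: ballot_def)

definition ballot_sum :: "nat \<Rightarrow> nat \<Rightarrow> rat poly" where
  "ballot_sum N L = (\<Sum>j<L. smult (ballot N j) (yplus1 ^ j))"

lemma ballot_sum_Suc:
  "ballot_sum (Suc N) (Suc L)
     = ballot_sum N (Suc L) + yplus1 * ballot_sum N L + yplus1^2 * ballot_sum (Suc N) (L - 1)"
  using sum_smult_power_shift_recurrence[where a = "ballot (Suc N)" and b = "ballot N" and u = 1
      and c = "ballot N" and d = "ballot (Suc N)" and x = yplus1 and L = L]
  by (simp add: ballot_sum_def ballot_Suc_rec)

lemma ballot_sum_Suc_Suc:
  "ballot_sum (Suc (Suc N)) (Suc L)
     = ballot_sum N (Suc L) + 2 * yplus1 * ballot_sum (Suc N) L
       + yplus1^2 * ballot_sum (Suc (Suc N)) (L - 1)"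
  using sum_smult_power_shift_recurrence[where a = "ballot (Suc (Suc N))" and b = "ballot N"
      and u = 2 and c = "ballot (Suc N)" and d = "ballot (Suc (Suc N))" and x = yplus1 and L = L]
  by (simp add: ballot_sum_def ballot_Suc_Suc_rec numeral_mult_conv_smult mult.assoc)

lemma ballot_Suc_self: "ballot N (Suc N) = 0"
  using binomial_symmetric[of N "N + Suc N"] by (simp add: ballot_def)

lemma ballot_sum_top: "ballot_sum N (Suc (Suc N)) = ballot_sum N (Suc N)"
  by (simp add: ballot_sum_def ballot_Suc_self)

lemma sum_linear_weight_choose:
  "(\<Sum>r\<le>d. (Suc d - r) * ((M + r) choose M)) = (M + d + 2) choose d"
proof (induction d)
  case 0
  show ?case by simp
next
  case (Suc d)
  have "(\<Sum>r\<le>Suc d. (Suc (Suc d) - r) * ((M + r) choose M))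
      = (\<Sum>r\<le>Suc d. (Suc d - r) * ((M + r) choose M)) + (\<Sum>r\<le>Suc d. (M + r) choose r)"
    by (subst sum.distrib[symmetric], rule sum.cong)
       (auto simp: Suc_diff_le binomial_symmetric[of M "M + _", simplified])
  also have "(\<Sum>r\<le>Suc d. (Suc d - r) * ((M + r) choose M))
      = (\<Sum>r\<le>d. (Suc d - r) * ((M + r) choose M))"
    by simp
  finally show ?case by (simp add: Suc.IH sum_choose_lower)
qed

lemma sum_ballot_weight_choose:
  assumes "i \<le> m"
  shows "(\<Sum>j<Suc m. (Suc m - j) * ((m + j) choose m) * (j choose i))
           = ((m + i) choose i) * ((2 * m + 2) choose (m - i))"
proof -
  define f where "f j = (Suc m - j) * ((m + j) choose m) * (j choose i)" for j
  have "(\<Sum>j<Suc m. f j) = (\<Sum>j\<in>{i..m}. f j)"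
    by (rule sum.mono_neutral_right) (auto simp: f_def binomial_eq_0)
  also have "\<dots> = (\<Sum>r\<le>m - i. f (i + r))"
    using sum.atLeastAtMost_shift_0[OF assms, of f] by (simp add: atLeast0AtMost)
  also have "\<dots> = (\<Sum>r\<le>m - i.
      ((m + i) choose i) * ((Suc (m - i) - r) * ((m + i + r) choose (m + i))))"
  proof (rule sum.cong)
    fix r assume "r \<in> {..m - i}"
    then have "Suc m - (i + r) = Suc (m - i) - r" using assms by simp
    moreover have "((i + r + m) choose m) * ((i + r) choose i)
        = ((i + r + m) choose (i + m)) * ((m + i) choose i)"
      using choose_mult_lemma[of i r m] binomial_symmetric[of i "i + m"] by (simp add: add.commute)
    ultimately show
      "f (i + r) = ((m + i) choose i) * ((Suc (m - i) - r) * ((m + i + r) choose (m + i)))"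
      by (simp add: f_def ac_simps)
  qed simp
  also have "\<dots> = ((m + i) choose i) * ((m + i + (m - i) + 2) choose (m - i))"
    by (simp only: sum_distrib_left[symmetric] sum_linear_weight_choose)
  also have "m + i + (m - i) + 2 = 2 * m + 2"
    using assms by simp
  finally show ?thesis by (simp add: f_def)
qed

lemma Suc_mult_ballot:
  assumes "j \<le> Suc m"
  shows "of_nat (Suc m) * ballot m j = of_nat ((Suc m - j) * ((m + j) choose m))"
proof -
  have absorb: "Suc m * ((m + j) choose Suc m) = j * ((m + j) choose m)"
    using Suc_times_binomial_add[of m "j - 1"] by (cases j) simp_all
  have le: "j * ((m + j) choose m) \<le> Suc m * ((m + j) choose m)"
    using assms by (rule mult_le_mono1)
  have "of_nat (Suc m) * ballot m j
      = of_nat (Suc m * ((m + j) choose m)) - of_nat (Suc m * ((m + j) choose Suc m))"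
    by (simp add: ballot_def algebra_simps)
  also have "\<dots> = of_nat (Suc m * ((m + j) choose m) - j * ((m + j) choose m))"
    by (simp only: absorb of_nat_diff[OF le])
  finally show ?thesis by (simp only: diff_mult_distrib)
qed

lemma coeff_yplus1_power: "coeff (yplus1 ^ j) i = of_nat (j choose i)"
proof (cases "i \<le> j")
  case True
  then show ?thesis
    by (simp add: yplus1_def yv_def one_pCons coeff_linear_poly_power)
next
  case False
  then have "degree (yplus1 ^ j) < i"
    using degree_power_le[of yplus1 j] by (simp add: yplus1_def yv_def one_pCons)
  with False show ?thesis by (simp add: coeff_eq_0 binomial_eq_0)
qed

lemma coeff_borel:
  "coeff (borel m) i = (if i \<le> m
     then of_nat ((2 * m + 2) choose (m - i)) * of_nat ((m + i) choose i) / of_nat (Suc m) else 0)"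
  by (simp add: borel_def coeff_sum)

lemma ballot_sum_eq_borel: "ballot_sum m (Suc m) = borel m"
proof (rule poly_eqI)
  fix i
  show "coeff (ballot_sum m (Suc m)) i = coeff (borel m) i"
  proof (cases "i \<le> m")
    case True
    have "of_nat (Suc m) * coeff (ballot_sum m (Suc m)) i
        = (\<Sum>j<Suc m. of_nat (Suc m) * ballot m j * of_nat (j choose i))"
      by (simp add: ballot_sum_def coeff_sum coeff_yplus1_power sum_distrib_left mult.assoc
          del: of_nat_Suc sum.lessThan_Suc)
    also have "\<dots> = of_nat (\<Sum>j<Suc m. (Suc m - j) * ((m + j) choose m) * (j choose i))"
      unfolding of_nat_sum
      by (rule sum.cong) (simp_all add: Suc_mult_ballot del: of_nat_Suc sum.lessThan_Suc)
    also have "\<dots> = of_nat ((m + i) choose i) * of_nat ((2 * m + 2) choose (m - i))"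
      by (simp only: sum_ballot_weight_choose[OF True] of_nat_mult)
    finally show ?thesis
      using True by (simp add: coeff_borel field_simps del: of_nat_Suc)
  next
    case False
    then show ?thesis
      by (simp add: ballot_sum_def coeff_sum coeff_yplus1_power coeff_borel binomial_eq_0)
  qed
qed

text \<open>\<open>mixed_moment m k\<close> vanishes for \<open>k > m\<close> through the truncated subtraction.\<close>

definition mixed_moment :: "nat \<Rightarrow> nat \<Rightarrow> rat poly" where
  "mixed_moment m k = ballot_sum (m + k) (Suc m - k)"

lemma mixed_moment_0: "mixed_moment m 0 = borel m"
  by (simp add: mixed_moment_def ballot_sum_eq_borel)

lemma mixed_moment_0_Suc: "mixed_moment 0 (Suc k) = 0"
  by (simp add: mixed_moment_def ballot_sum_def)

lemma mixed_moment_Suc_0: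
  "mixed_moment (Suc m) 0 = (yplus1 + 1) * mixed_moment m 0 + yplus1^2 * mixed_moment m 1"
  using ballot_sum_Suc[of m "Suc m"] by (simp add: mixed_moment_def ballot_sum_top algebra_simps)

lemma mixed_moment_Suc_Suc:
  "mixed_moment (Suc m) (Suc k)
     = mixed_moment m k + 2 * yplus1 * mixed_moment m (Suc k)
       + yplus1^2 * mixed_moment m (Suc (Suc k))"
proof (cases "k \<le> m")
  case True
  then show ?thesis
    using ballot_sum_Suc_Suc[of "m + k" "m - k"] by (simp add: mixed_moment_def Suc_diff_le)
qed (simp add: mixed_moment_def ballot_sum_def)

lemma monom_mult_linear:
  "monom 1 m * ([:a, 1:] * q) = monom 1 (Suc m) * q + smult a (monom 1 m * q)"
  for q :: "'a::comm_ring_1 poly"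
  by (simp add: monom_Suc algebra_simps)

lemma Pop_Suc_Suc_yplus1:
  "Pop (Suc (Suc n)) = [:- (2 * yplus1), 1:] * Pop (Suc n) - smult (yplus1^2) (Pop n)"
  by (simp add: yplus1_def)

lemma borel_functional_monom_mult_Pop:
  "functional_of_moments borel (monom 1 m * Pop k) = yplus1 ^ (2 * k) * mixed_moment m k"
proof (induction k arbitrary: m rule: Pop.induct)
  case 1
  show ?case by (simp add: functional_of_moments_monom mixed_moment_0)
next
  case 2
  have "monom 1 m * Pop 1 = monom 1 (Suc m) + smult (- (yplus1 + 1)) (monom 1 m)"
    using monom_mult_linear[of m "- (yv + 2)" 1] by (simp add: yplus1_def algebra_simps)
  then show ?case
    by (simp add: functional_of_moments_add functional_of_moments_smult functional_of_moments_monom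
        mixed_moment_Suc_0 power2_eq_square algebra_simps del: Pop.simps flip: mixed_moment_0)
next
  case (3 k)
  have "monom 1 m * Pop (Suc (Suc k)) = monom 1 (Suc m) * Pop (Suc k)
      + smult (- (2 * yplus1)) (monom 1 m * Pop (Suc k)) - smult (yplus1^2) (monom 1 m * Pop k)"
    by (simp only: Pop_Suc_Suc_yplus1 right_diff_distrib monom_mult_linear mult_smult_right)
  then have "functional_of_moments borel (monom 1 m * Pop (Suc (Suc k)))
      = functional_of_moments borel (monom 1 (Suc m) * Pop (Suc k))
        - 2 * yplus1 * functional_of_moments borel (monom 1 m * Pop (Suc k))
        - yplus1^2 * functional_of_moments borel (monom 1 m * Pop k)"
    by (simp add: functional_of_moments_add functional_of_moments_diff functional_of_moments_smult
        del: Pop.simps)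
  also have "\<dots> = yplus1 ^ (2 * Suc k) * mixed_moment (Suc m) (Suc k)
        - 2 * yplus1 * (yplus1 ^ (2 * Suc k) * mixed_moment m (Suc k))
        - yplus1^2 * (yplus1 ^ (2 * k) * mixed_moment m k)"
    by (simp only: 3)
  also have "\<dots> = yplus1 ^ (2 * Suc (Suc k)) * mixed_moment m (Suc (Suc k))"
    by (simp add: mixed_moment_Suc_Suc power2_eq_square algebra_simps)
  finally show ?case .
qed

lemma borel_functional_Pop: "functional_of_moments borel (Pop n) = (if n = 0 then 1 else 0)"
  using borel_functional_monom_mult_Pop[of 0 n]
  by (cases n) (simp_all add: mixed_moment_0 mixed_moment_0_Suc borel_def)

lemma moment_functional_borel: "moment_functional (functional_of_moments borel)"
  using borel_functional_Pop
  by (auto simp: moment_functional_def functional_of_moments_add functional_of_moments_smult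
      simp del: Pop.simps simp flip: Pop.simps(1))

lemma Lmat_row_moments:
  assumes "moment_functional \<L>"
  shows "(\<Sum>k\<le>n. Lmat n k * \<L> (monom 1 k)) = (if n = 0 then 1 else 0)"
proof -
  have "\<L> (Pop n) = (\<Sum>k\<le>n. Lmat n k * \<L> (monom 1 k))"
    using assms degree_Pop[of n]
    by (auto simp: moment_functional_def Lmat_eq_coeff_Pop intro: linear_functional_expand)
  with assms show ?thesis
    by (cases n) (auto simp: moment_functional_def)
qed

theorem mainTheorem7:
  shows "(\<exists>M. is_lower_inverse Lmat M)
     \<and> (\<forall>M. is_lower_inverse Lmat M \<longrightarrow> (\<forall>n. M n 0 = borel n))
     \<and> (\<exists>\<L>. moment_functional \<L>)
     \<and> (\<forall>\<L>. moment_functional \<L> \<longrightarrow> (\<forall>n. \<L> (monom 1 n) = borel n))"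
proof (intro conjI allI impI)
  have borel_solves: "(\<Sum>k\<le>n. Lmat n k * borel k) = (if n = 0 then 1 else 0)" for n
    using Lmat_row_moments[OF moment_functional_borel] by (simp add: functional_of_moments_monom)
  show "\<exists>M. is_lower_inverse Lmat M"
    using unitriangular_lower_inverse[of Lmat, OF Lmat_diag] by blast
  show "M n 0 = borel n" if "is_lower_inverse Lmat M" for M n
  proof -
    have "(\<Sum>k\<le>i. Lmat i k * M k 0) = (if i = 0 then 1 else 0)" for i
      using that by (simp add: is_lower_inverse_def)
    from unitriangular_solution_unique[where x = "\<lambda>k. M k 0", OF Lmat_diag this borel_solves]
    show ?thesis .
  qed
  show "\<exists>\<L>. moment_functional \<L>"
    using moment_functional_borel by blast
  show "\<L> (monom 1 n) = borel n" if "moment_functional \<L>" for \<L> n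
    using unitriangular_solution_unique[of Lmat, OF Lmat_diag Lmat_row_moments[OF that]
        borel_solves] .
qed

end
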